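(* Let $k\ge 4$, $n=2k-1$, $\lambda\in\overline{\mathcal{U}}_{T_n}$, and let $Y=\mathrm{KN}(S_\lambda)$ with hook lengths $h_{i,j}$. Write the elements of $S_\lambda$ increasingly as $0=s_0<s_1<\cdots$ and let $z$ be the index with $s_z=n-2$. Then $h_{i+1,1}=h_{1,i+1}$ for every $0\le i\le z-1$, and $h_{1,i+1}=h_{i,1}$ for every $z+1\le i\le n-2$.
   Context: A partition of $N$ into distinct parts is a sequence $\lambda=(\lambda_1<\dots<\lambda_t)$ of positive integers with sum $N$ and $t\ge 2$, identified with its set of parts. Missing parts: $\mathcal{M}_\lambda=\{1,\dots,\lambda_t\}\setminus\lambda$. $\lambda$ is refinable if two distinct missing parts sum to a part of $\lambda$, unrefinable otherwise; $\mathcal{U}_N$ is the set of unrefinable partitions of $N$. An element of $\mathcal{U}_N$ is maximal if its largest part is the maximum of the largest parts of elements of $\mathcal{U}_N$; $\widetilde{\mathcal{U}}_N$ is the set of these and $\overline{\mathcal{U}}_N=\{\lambda\in\widetilde{\mathcal{U}}_N:\#\mathcal{M}_\lambda=\lfloor\lambda_t/2\rfloor\}$. $T_n=n(n+1)/2$. For $\lambda\in\overline{\mathcal{U}}_{T_n}$ (with $n=2k-1$, $k\ge 4$) one knows $\lambda_t=2n-4$, $t=n-2$ and $n-2\notin\lambda$. $S_\lambda=\mathbb{N}_0\setminus\lambda$. The Keith–Nath transformation sends a set $S\subseteq\mathbb{N}_0$ with $0\in S$ and finite complement to the Young diagram $\mathrm{KN}(S)$ whose boundary is the lattice path that, starting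 at the origin, takes for $j=0,1,\dots,\max(\mathbb{N}_0\setminus S)$ an east step if $j\in S$ and a north step otherwise. Diagrams are in English convention; $h_{i,j}$ is the hook length of the cell in row $i$ (from the top) and column $j$ (from the left): (cells to its right in its row) + (cells below it in its column) + 1. *)

theory Defs
  imports Main
begin

definition distinct_partition :: "nat \<Rightarrow> nat set \<Rightarrow> bool" where
  "distinct_partition N P \<longleftrightarrow> finite P \<and> 0 \<notin> P \<and> \<Sum>P = N \<and> card P \<ge> 2"

definition missing_parts :: "nat set \<Rightarrow> nat set" where
  "missing_parts P = {1..Max P} - P"

definition refinable :: "nat set \<Rightarrow> bool" where
  "refinable P \<longleftrightarrow> (\<exists>a b. a \<in> missing_parts P \<and> b \<in> missing_parts P \<and> a \<noteq> b \<and> a + b \<in> P)"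

definition unrefinable_set :: "nat \<Rightarrow> nat set set" where
  "unrefinable_set N = {P. distinct_partition N P \<and> \<not> refinable P}"

definition maximal_unrefinable :: "nat \<Rightarrow> nat set set" where
  "maximal_unrefinable N =
     {P \<in> unrefinable_set N. Max P = Max (Max ` unrefinable_set N)}"

definition Ubar :: "nat \<Rightarrow> nat set set" where
  "Ubar N = {P \<in> maximal_unrefinable N. card (missing_parts P) = Max P div 2}"

definition tri :: "nat \<Rightarrow> nat" where
  "tri n = n * (n + 1) div 2"

text \<open>The lattice path takes, for j = 0..max gap, an east step
 if j \<in> S and a north step otherwise. The north step at a gap g lies at x-coordinate
 #{s \<in> S. s < g} and between heights #{gaps < g} and #{gaps < g}+1. The Young diagram is the
 region to the upper left of the path inside the bounding box; in English convention with
 1-based (row from top, column from left) coordinates, the row produced by gap g is row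
 (#gaps - #{gaps < g}) and it has #{s \<in> S. s < g} cells.\<close>
definition KN :: "nat set \<Rightarrow> (nat \<times> nat) set" where
  "KN S = {(i, j). \<exists>g. g \<notin> S \<and>
              i = card (UNIV - S) - card {g'. g' \<notin> S \<and> g' < g} \<and>
              1 \<le> j \<and> j \<le> card {s \<in> S. s < g}}"

definition hook :: "(nat \<times> nat) set \<Rightarrow> nat \<Rightarrow> nat \<Rightarrow> nat" where
  "hook D i j = card {j'. j' > j \<and> (i, j') \<in> D} + card {i'. i' > i \<and> (i', j) \<in> D} + 1"

end

(* Let m be the largest part of lam and P = (m - 1) div 2. For 0 < x <= P at least one of x and
   m - x is a part, since otherwise they would refine m; having exactly m div 2 missing parts forces
   exactly one of them to be a part and, for even m, m div 2 to be missing. Hence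
   sum lam = m + T_P + D with D the sum of m - 2x over the missing x <= P, and comparing with
   T_n excludes m >= 2n - 3 (D would be 1 although it is even, or 2 although it is a sum of
   distinct odd numbers), while the partition {1..n-3} with n + 1 and 2n - 4 added shows
   m >= 2n - 4. So m = 2(n - 2), and x is a part iff m - x is not, for x <> n - 2.

   In KN(S) the row produced by a gap g has first-column hook length g, and the first-row cell in
   the column after the elements of S below s has hook length m - s. The reflection x -> m - x
   maps the elements of S up to s, except n - 2, onto the parts >= m - s, so the row of the gap
   m - s is the column of s shifted by one exactly when s < n - 2. *)

theory Submission
  imports Defs
begin

section \<open>Counting elements below a bound\<close>

definition rank :: "nat set \<Rightarrow> nat \<Rightarrow> nat" where
  "rank A a = card {x \<in> A. x < a}"

lemma rank_mono: "a \<le> b \<Longrightarrow> rank A a \<le> rank A b"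
  unfolding rank_def by (rule card_mono[OF finite_M_bounded_by_nat]) auto

lemma rank_strict_mono: "a \<in> A \<Longrightarrow> a < b \<Longrightarrow> rank A a < rank A b"
  unfolding rank_def by (rule psubset_card_mono[OF finite_M_bounded_by_nat]) auto

lemma rank_less_rank_iff:
  assumes "a \<in> A"
  shows "rank A a < rank A b \<longleftrightarrow> a < b"
proof
  assume "rank A a < rank A b"
  show "a < b"
  proof (rule ccontr)
    assume "\<not> a < b"
    then have "rank A b \<le> rank A a"
      by (intro rank_mono) simp
    with \<open>rank A a < rank A b\<close> show False
      by simp
  qed
qed (rule rank_strict_mono[OF assms])

lemma inj_on_rank: "inj_on (rank A) A"
proof (rule inj_onI)
  fix a b
  assume "a \<in> A" "b \<in> A" "rank A a = rank A b"
  then show "a = b"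
    using rank_less_rank_iff[of a A b] rank_less_rank_iff[of b A a] by auto
qed

lemma rank_less_card: "finite A \<Longrightarrow> a \<in> A \<Longrightarrow> rank A a < card A"
  unfolding rank_def by (rule psubset_card_mono) auto

lemma bij_betw_rank: "finite A \<Longrightarrow> bij_betw (rank A) A {..<card A}"
proof -
  assume "finite A"
  then have "rank A ` A \<subseteq> {..<card A}"
    using rank_less_card by blast
  moreover have "card (rank A ` A) = card {..<card A}"
    using card_image[OF inj_on_rank] by simp
  ultimately have "rank A ` A = {..<card A}"
    by (simp add: card_subset_eq)
  then show ?thesis
    using inj_on_rank by (simp add: bij_betw_def)
qed

lemma rank_restrict: "a \<le> b \<Longrightarrow> rank {x \<in> A. x < b} a = rank A a"
  unfolding rank_def by (rule arg_cong[where f = card]) auto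

lemma rank_surj_below:
  assumes "i < rank A b"
  obtains a where "a \<in> A" "a < b" "rank A a = i"
proof -
  let ?B = "{x \<in> A. x < b}"
  have "rank ?B ` ?B = {..<card ?B}"
    using bij_betw_rank[OF finite_M_bounded_by_nat] by (rule bij_betw_imp_surj_on)
  moreover have "i \<in> {..<card ?B}"
    using assms by (simp add: rank_def)
  ultimately have "i \<in> rank ?B ` ?B"
    by simp
  then obtain a where "a \<in> ?B" "rank ?B a = i"
    by blast
  then show thesis
    using that rank_restrict[of a b A] by auto
qed

lemma rank_add_rank_Compl: "rank A a + rank (- A) a = a"
proof -
  have "rank A a + rank (- A) a = card ({x \<in> A. x < a} \<union> {x \<in> - A. x < a})"
    unfolding rank_def by (rule card_Un_disjoint[symmetric]) auto
  also have "{x \<in> A. x < a} \<union> {x \<in> - A. x < a} = {..<a}"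
    by auto
  finally show ?thesis
    by simp
qed

lemma card_interval_eq_rank_diff:
  assumes "a \<le> b"
  shows "card {x \<in> A. a \<le> x \<and> x < b} = rank A b - rank A a"
proof -
  have "finite {x \<in> A. a \<le> x \<and> x < b}"
    by (rule finite_subset[of _ "{..<b}"]) auto
  then have "card ({x \<in> A. x < a} \<union> {x \<in> A. a \<le> x \<and> x < b})
      = rank A a + card {x \<in> A. a \<le> x \<and> x < b}"
    unfolding rank_def by (intro card_Un_disjoint) (auto simp: finite_M_bounded_by_nat)
  moreover have "{x \<in> A. x < a} \<union> {x \<in> A. a \<le> x \<and> x < b} = {x \<in> A. x < b}"
    using assms by auto
  ultimately show ?thesis
    unfolding rank_def by simp
qed

lemma card_atLeast_eq_card_diff_rank:
  assumes "finite A"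
  shows "card {x \<in> A. a \<le> x} = card A - rank A a"
proof -
  have "card ({x \<in> A. x < a} \<union> {x \<in> A. a \<le> x}) = rank A a + card {x \<in> A. a \<le> x}"
    unfolding rank_def using assms by (intro card_Un_disjoint) auto
  moreover have "{x \<in> A. x < a} \<union> {x \<in> A. a \<le> x} = A"
    by auto
  ultimately show ?thesis
    by simp
qed

lemma card_atMost_eq_Suc_rank: "a \<in> A \<Longrightarrow> card {x \<in> A. x \<le> a} = Suc (rank A a)"
proof -
  assume "a \<in> A"
  then have "{x \<in> A. x \<le> a} = insert a {x \<in> A. x < a}"
    by auto
  then show ?thesis
    unfolding rank_def by (simp add: finite_M_bounded_by_nat)
qed

lemma rank_Max:
  assumes "finite A" "A \<noteq> {}"
  shows "rank A (Max A) = card A - 1"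
proof -
  have "x < Max A \<longleftrightarrow> x \<noteq> Max A" if "x \<in> A" for x
    using Max_ge[OF assms(1) that] by auto
  then have "{x \<in> A. x < Max A} = A - {Max A}"
    by auto
  then show ?thesis
    unfolding rank_def using assms by (simp add: Max_in)
qed

section \<open>Hook lengths of Keith--Nath diagrams\<close>

lemma mem_KN_Compl:
  "(i, j) \<in> KN (- L) \<longleftrightarrow> (\<exists>g\<in>L. i = card L - rank L g \<and> 1 \<le> j \<and> j \<le> rank (- L) g)"
  unfolding KN_def rank_def by auto

lemma card_diff_rank_less_iff:
  assumes "finite A" "a \<in> A" "b \<in> A"
  shows "card A - rank A a < card A - rank A b \<longleftrightarrow> b < a"
  using rank_less_card[OF assms(1)] rank_less_rank_iff assms(2,3)
  by (metis diff_less_mono2 not_less_iff_gr_or_eq)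

lemma hook_KN_Compl:
  assumes "finite L" "g \<in> L" "1 \<le> j"
  shows "hook (KN (- L)) (card L - rank L g) j
    = (rank (- L) g - j) + card {h \<in> L. h < g \<and> j \<le> rank (- L) h} + 1"
proof -
  define row where "row h = card L - rank L h" for h
  have row_less_iff: "row h < row h' \<longleftrightarrow> h' < h" if "h \<in> L" "h' \<in> L" for h h'
    unfolding row_def using card_diff_rank_less_iff[OF assms(1) that] .
  have inj: "inj_on row L"
  proof (rule inj_onI)
    fix h h'
    assume "h \<in> L" "h' \<in> L" "row h = row h'"
    then show "h = h'"
      using row_less_iff[of h h'] row_less_iff[of h' h] by auto
  qed
  have mem: "(i, j') \<in> KN (- L) \<longleftrightarrow> (\<exists>h\<in>L. i = row h \<and> 1 \<le> j' \<and> j' \<le> rank (- L) h)" for i j'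
    unfolding mem_KN_Compl row_def ..
  have row_mem: "(row g, j') \<in> KN (- L) \<longleftrightarrow> 1 \<le> j' \<and> j' \<le> rank (- L) g" for j'
  proof
    assume "(row g, j') \<in> KN (- L)"
    then obtain h where "h \<in> L" "row g = row h" "1 \<le> j'" "j' \<le> rank (- L) h"
      unfolding mem by blast
    moreover have "h = g"
      using inj_onD[OF inj \<open>row g = row h\<close> assms(2) \<open>h \<in> L\<close>] by simp
    ultimately show "1 \<le> j' \<and> j' \<le> rank (- L) g"
      by simp
  qed (use assms(2) in \<open>auto simp: mem\<close>)
  have right: "{j'. j < j' \<and> (row g, j') \<in> KN (- L)} = {j<..rank (- L) g}"
    using assms(3) by (auto simp: row_mem)
  have below: "{i. row g < i \<and> (i, j) \<in> KN (- L)} = row ` {h \<in> L. h < g \<and> j \<le> rank (- L) h}"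
  proof (intro set_eqI iffI)
    fix i
    assume "i \<in> {i. row g < i \<and> (i, j) \<in> KN (- L)}"
    then obtain h where "h \<in> L" "i = row h" "j \<le> rank (- L) h" "row g < row h"
      unfolding mem by blast
    then show "i \<in> row ` {h \<in> L. h < g \<and> j \<le> rank (- L) h}"
      using row_less_iff[OF assms(2) \<open>h \<in> L\<close>] by auto
  next
    fix i
    assume "i \<in> row ` {h \<in> L. h < g \<and> j \<le> rank (- L) h}"
    then obtain h where "h \<in> L" "h < g" "j \<le> rank (- L) h" "i = row h"
      by blast
    then show "i \<in> {i. row g < i \<and> (i, j) \<in> KN (- L)}"
      unfolding mem using row_less_iff[OF assms(2) \<open>h \<in> L\<close>] assms(3) by auto
  qed
  have "card (row ` {h \<in> L. h < g \<and> j \<le> rank (- L) h}) = card {h \<in> L. h < g \<and> j \<le> rank (- L) h}"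
    by (rule card_image) (rule inj_on_subset[OF inj], auto)
  then show ?thesis
    unfolding hook_def row_def[symmetric] right below by simp
qed

lemma hook_KN_Compl_first_column:
  assumes "finite L" "0 \<notin> L" "g \<in> L"
  shows "hook (KN (- L)) (card L - rank L g) 1 = g"
proof -
  have row_nonempty: "1 \<le> rank (- L) h" if "h \<in> L" for h
    using rank_strict_mono[of 0 "- L" h] assms(2) that by (cases h) auto
  then have "{h \<in> L. h < g \<and> 1 \<le> rank (- L) h} = {h \<in> L. h < g}"
    by blast
  then have "hook (KN (- L)) (card L - rank L g) 1 = (rank (- L) g - 1) + rank L g + 1"
    using hook_KN_Compl[OF assms(1,3), of 1] by (simp add: rank_def)
  then show ?thesis
    using rank_add_rank_Compl[of L g] row_nonempty[OF assms(3)] by linarith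
qed

lemma hook_KN_Compl_first_row:
  assumes "finite L" "L \<noteq> {}" "s \<notin> L" "s < Max L"
  shows "hook (KN (- L)) 1 (rank (- L) s + 1) = Max L - s"
proof -
  define m where "m = Max L"
  have "m \<in> L"
    unfolding m_def using assms(1,2) by (rule Max_in)
  have "0 < card L"
    using assms(1,2) by (simp add: card_gt_0_iff)
  then have top_row: "card L - rank L m = 1"
    using rank_Max[OF assms(1,2)] unfolding m_def by simp
  have "rank (- L) s + 1 \<le> rank (- L) h \<longleftrightarrow> s \<le> h" if "h \<in> L" for h
  proof -
    have "s \<noteq> h"
      using that assms(3) by auto
    then show ?thesis
      using rank_less_rank_iff[of s "- L" h] assms(3) by auto
  qed
  then have "{h \<in> L. h < m \<and> rank (- L) s + 1 \<le> rank (- L) h} = {h \<in> L. s \<le> h \<and> h < m}"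
    by auto
  then have "hook (KN (- L)) 1 (rank (- L) s + 1)
      = (rank (- L) m - (rank (- L) s + 1)) + (rank L m - rank L s) + 1"
    using hook_KN_Compl[OF assms(1) \<open>m \<in> L\<close> le_add2] card_interval_eq_rank_diff[of s m L]
      assms(4) top_row
    unfolding m_def by simp
  moreover have "rank (- L) s < rank (- L) m" "rank L s \<le> rank L m"
    using rank_strict_mono[of s "- L" m] rank_mono[of s m L] assms(3,4) unfolding m_def by auto
  ultimately have "hook (KN (- L)) 1 (rank (- L) s + 1) = m - s"
    using rank_add_rank_Compl[of L m] rank_add_rank_Compl[of L s] by linarith
  then show ?thesis
    unfolding m_def .
qed

lemma hook_KN_Compl_reflect:
  assumes "finite L" "0 \<notin> L" "Max L = 2 * c" "c \<notin> L"
    and reflect: "\<And>x. x \<le> 2 * c \<Longrightarrow> x \<noteq> c \<Longrightarrow> x \<in> L \<longleftrightarrow> 2 * c - x \<notin> L"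
    and "s \<notin> L" "s < 2 * c" "s \<noteq> c"
  shows "hook (KN (- L)) (card ({x \<in> - L. x \<le> s} - {c})) 1 = hook (KN (- L)) 1 (rank (- L) s + 1)"
proof -
  have "L \<noteq> {}"
    using reflect[of 0] assms(2,7) by auto
  have "2 * c - s \<in> L"
    using reflect[of s] assms(6-8) by simp
  have "{g \<in> L. 2 * c - s \<le> g} = (\<lambda>x. 2 * c - x) ` ({x \<in> - L. x \<le> s} - {c})"
  proof (intro set_eqI iffI)
    fix g
    assume g: "g \<in> {g \<in> L. 2 * c - s \<le> g}"
    then have "g \<le> 2 * c"
      using Max_ge[OF assms(1)] assms(3) by auto
    moreover have "g \<noteq> c"
      using g assms(4) by auto
    ultimately have "2 * c - g \<in> {x \<in> - L. x \<le> s} - {c}"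
      using g reflect[of "2 * c - g"] by auto
    moreover have "g = 2 * c - (2 * c - g)"
      using \<open>g \<le> 2 * c\<close> by simp
    ultimately show "g \<in> (\<lambda>x. 2 * c - x) ` ({x \<in> - L. x \<le> s} - {c})"
      by blast
  next
    fix g
    assume "g \<in> (\<lambda>x. 2 * c - x) ` ({x \<in> - L. x \<le> s} - {c})"
    then obtain x where "x \<notin> L" "x \<le> s" "x \<noteq> c" "g = 2 * c - x"
      by auto
    then show "g \<in> {g \<in> L. 2 * c - s \<le> g}"
      using reflect[of x] assms(7) by auto
  qed
  moreover have "inj_on (\<lambda>x. 2 * c - x) ({x \<in> - L. x \<le> s} - {c})"
    using assms(7) by (auto intro!: inj_onI)
  ultimately have "card {g \<in> L. 2 * c - s \<le> g} = card ({x \<in> - L. x \<le> s} - {c})"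
    by (simp add: card_image)
  then have "card ({x \<in> - L. x \<le> s} - {c}) = card L - rank L (2 * c - s)"
    using card_atLeast_eq_card_diff_rank[OF assms(1)] by simp
  then have "hook (KN (- L)) (card ({x \<in> - L. x \<le> s} - {c})) 1 = 2 * c - s"
    using hook_KN_Compl_first_column[OF assms(1,2) \<open>2 * c - s \<in> L\<close>] by simp
  also have "\<dots> = hook (KN (- L)) 1 (rank (- L) s + 1)"
    using hook_KN_Compl_first_row[OF assms(1) \<open>L \<noteq> {}\<close> assms(6)] assms(3,7) by simp
  finally show ?thesis .
qed

lemma hook_KN_Compl_symmetric:
  assumes "finite L" "0 \<notin> L" "Max L = 2 * c" "c \<notin> L"
    and reflect: "\<And>x. x \<le> 2 * c \<Longrightarrow> x \<noteq> c \<Longrightarrow> x \<in> L \<longleftrightarrow> 2 * c - x \<notin> L"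
  shows "i < rank (- L) c \<Longrightarrow> hook (KN (- L)) (i + 1) 1 = hook (KN (- L)) 1 (i + 1)"
    and "rank (- L) c < i \<Longrightarrow> i < rank (- L) (2 * c) \<Longrightarrow> hook (KN (- L)) 1 (i + 1) = hook (KN (- L)) i 1"
proof -
  assume "i < rank (- L) c"
  then obtain s where s: "s \<in> - L" "s < c" "rank (- L) s = i"
    by (rule rank_surj_below)
  then have "{x \<in> - L. x \<le> s} - {c} = {x \<in> - L. x \<le> s}"
    by auto
  then have "card ({x \<in> - L. x \<le> s} - {c}) = i + 1"
    using card_atMost_eq_Suc_rank[of s "- L"] s by simp
  then show "hook (KN (- L)) (i + 1) 1 = hook (KN (- L)) 1 (i + 1)"
    using hook_KN_Compl_reflect[OF assms, of s] s by simp
next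
  assume "rank (- L) c < i" "i < rank (- L) (2 * c)"
  obtain s where s: "s \<in> - L" "s < 2 * c" "rank (- L) s = i"
    using \<open>i < rank (- L) (2 * c)\<close> by (rule rank_surj_below)
  then have "c < s"
    using rank_less_rank_iff[of c "- L" s] assms(4) \<open>rank (- L) c < i\<close> by simp
  moreover have "finite {x \<in> - L. x \<le> s}"
    by (rule finite_subset[of _ "{..s}"]) auto
  ultimately have "card ({x \<in> - L. x \<le> s} - {c}) = i"
    using card_atMost_eq_Suc_rank[of s "- L"] s assms(4) by simp
  then show "hook (KN (- L)) 1 (i + 1) = hook (KN (- L)) i 1"
    using hook_KN_Compl_reflect[OF assms, of s] s \<open>c < s\<close> by simp
qed

section \<open>Unrefinable partitions with half of the parts missing\<close>

lemma double_Sum_atLeast1_atMost: "2 * \<Sum>{1..m} = m * (m + 1 :: nat)"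
  using double_gauss_sum_from_Suc_0[of m, where 'a = nat] by simp

lemma double_tri: "2 * tri n = n * (n + 1)"
  unfolding tri_def by simp

lemma finite_unrefinable_set: "finite (unrefinable_set N)"
proof (rule finite_subset)
  show "unrefinable_set N \<subseteq> Pow {..N}"
  proof
    fix P
    assume "P \<in> unrefinable_set N"
    then have "finite P" "\<Sum>P = N"
      unfolding unrefinable_set_def distinct_partition_def by auto
    then show "P \<in> Pow {..N}"
      using member_le_sum[of _ P id] by auto
  qed
qed simp

lemma unrefinable_set_tri_witness:
  assumes "6 \<le> n"
  shows "{1..n - 3} \<union> {n + 1, 2 * n - 4} \<in> unrefinable_set (tri n)"
    and "Max ({1..n - 3} \<union> {n + 1, 2 * n - 4}) = 2 * n - 4"
proof -
  define P where "P = {1..n - 3} \<union> {n + 1, 2 * n - 4}"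
  obtain q where q: "n = q + 6"
    using assms by (metis add.commute le_add_diff_inverse)
  have "finite P" "0 \<notin> P"
    unfolding P_def q by auto
  have "card {n + 1, 2 * n - 4} = 2" "{n + 1, 2 * n - 4} \<subseteq> P"
    unfolding P_def q by auto
  then have "2 \<le> card P"
    using card_mono[OF \<open>finite P\<close>] by metis
  have "\<Sum>P = \<Sum>{1..q + 3} + ((q + 7) + (2 * q + 8))"
    unfolding P_def q by (subst sum.union_disjoint) (auto simp: add.commute)
  then have "2 * \<Sum>P = 2 * tri n"
    using double_Sum_atLeast1_atMost[of "q + 3"] double_tri[of n] unfolding q by (simp add: algebra_simps)
  then have "\<Sum>P = tri n"
    by simp
  show Max_P: "Max P = 2 * n - 4"
    unfolding P_def q by (rule Max_eqI) auto
  have "\<not> refinable P"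
  proof
    assume "refinable P"
    then obtain a b where "a \<in> missing_parts P" "b \<in> missing_parts P" "a \<noteq> b" "a + b \<in> P"
      unfolding refinable_def by blast
    moreover have "a + b \<le> 2 * n - 4"
      using Max_ge[OF \<open>finite P\<close> \<open>a + b \<in> P\<close>] Max_P by simp
    ultimately show False
      unfolding missing_parts_def P_def q by auto
  qed
  show "P \<in> unrefinable_set (tri n)"
    unfolding unrefinable_set_def distinct_partition_def
    using \<open>finite P\<close> \<open>0 \<notin> P\<close> \<open>2 \<le> card P\<close> \<open>\<Sum>P = tri n\<close> \<open>\<not> refinable P\<close> by simp
qed

lemma Max_maximal_unrefinable_tri_ge:
  assumes "6 \<le> n" "L \<in> maximal_unrefinable (tri n)"
  shows "2 * n - 4 \<le> Max L"
proof -
  have "2 * n - 4 \<in> Max ` unrefinable_set (tri n)"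
    using unrefinable_set_tri_witness[OF assms(1)] by (metis imageI)
  then show ?thesis
    using assms(2) Max_ge[OF finite_imageI[OF finite_unrefinable_set]]
    unfolding maximal_unrefinable_def by auto
qed

lemma card_missing_parts:
  assumes "finite L" "0 \<notin> L" "L \<noteq> {}"
  shows "card (missing_parts L) + card L = Max L"
proof -
  have "L \<subseteq> {1..Max L}"
    using Max_ge[OF assms(1)] assms(2) by (auto simp: Suc_le_eq intro: gr0I)
  then show ?thesis
    using card_Diff_subset[OF assms(1)] card_mono[of "{1..Max L}" L] unfolding missing_parts_def by simp
qed

context
  fixes L :: "nat set"
  assumes finite_L: "finite L" and zero_notin_L: "0 \<notin> L" and L_ne: "L \<noteq> {}"
    and unrefinable_L: "\<not> refinable L"
    and half_missing: "card (missing_parts L) = Max L div 2"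
begin

lemma unrefinable_half_missing_bij:
  "bij_betw (\<lambda>x. if x \<in> L then x else Max L - x) {1..(Max L - 1) div 2} (L - {Max L})"
proof -
  define m where "m = Max L"
  define h where "h x = (if x \<in> L then x else m - x)" for x
  have "m \<in> L"
    unfolding m_def using finite_L L_ne by (rule Max_in)
  have "h x \<in> L - {m}" if "x \<in> {1..(m - 1) div 2}" for x
  proof (cases "x \<in> L")
    case False
    have "m - x \<in> L"
    proof (rule ccontr)
      assume "m - x \<notin> L"
      then have "x \<in> missing_parts L" "m - x \<in> missing_parts L" "x \<noteq> m - x"
        using False that unfolding missing_parts_def m_def[symmetric] by auto
      then show False
        using unrefinable_L \<open>m \<in> L\<close> that unfolding refinable_def by fastforce
    qed
    then show ?thesis
      using False that unfolding h_def by auto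
  qed (use that in \<open>auto simp: h_def\<close>)
  then have "h ` {1..(m - 1) div 2} \<subseteq> L - {m}"
    by blast
  moreover have inj: "inj_on h {1..(m - 1) div 2}"
    by (rule inj_onI) (auto simp: h_def split: if_splits)
  moreover have "card (L - {m}) = m - m div 2 - 1"
    using card_missing_parts[OF finite_L zero_notin_L L_ne] half_missing card_Diff_singleton[OF \<open>m \<in> L\<close>]
    unfolding m_def by simp
  then have "card (h ` {1..(m - 1) div 2}) = card (L - {m})"
    using card_image[OF inj] by (simp; presburger)
  ultimately have "h ` {1..(m - 1) div 2} = L - {m}"
    using finite_L by (intro card_subset_eq) auto
  with inj show ?thesis
    unfolding bij_betw_def h_def[abs_def] m_def by simp
qed

lemma unrefinable_half_missing_part_cases:
  assumes "g \<in> L" "g \<noteq> Max L"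
  obtains y where "0 < y" "2 * y < Max L" "y \<in> L" "g = y"
    | y where "0 < y" "2 * y < Max L" "y \<notin> L" "g = Max L - y"
proof -
  obtain y where y: "y \<in> {1..(Max L - 1) div 2}" "g = (if y \<in> L then y else Max L - y)"
    using unrefinable_half_missing_bij assms unfolding bij_betw_def by blast
  moreover have "0 < y" "2 * y < Max L"
    using y(1) unfolding atLeastAtMost_iff by presburger+
  ultimately show thesis
    using that by (cases "y \<in> L") auto
qed

lemma unrefinable_half_missing_reflect:
  assumes "x \<le> Max L" "2 * x \<noteq> Max L"
  shows "x \<in> L \<longleftrightarrow> Max L - x \<notin> L"
proof -
  have pair: "y \<in> L \<longleftrightarrow> Max L - y \<notin> L" if "0 < y" "2 * y < Max L" for y
  proof
    assume "y \<in> L"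
    show "Max L - y \<notin> L"
    proof
      assume "Max L - y \<in> L"
      moreover have "Max L - y \<noteq> Max L"
        using that by simp
      ultimately show False
      proof (rule unrefinable_half_missing_part_cases)
        fix y'
        assume "2 * y' < Max L" "Max L - y = y'"
        then show False
          using that by linarith
      next
        fix y'
        assume "2 * y' < Max L" "y' \<notin> L" "Max L - y = Max L - y'"
        then have "y' = y"
          using that by linarith
        with \<open>y' \<notin> L\<close> \<open>y \<in> L\<close> show False
          by simp
      qed
    qed
  next
    assume "Max L - y \<notin> L"
    have "y \<in> {1..(Max L - 1) div 2}"
      using that unfolding atLeastAtMost_iff by presburger
    then have "(if y \<in> L then y else Max L - y) \<in> L - {Max L}"
      using bij_betwE[OF unrefinable_half_missing_bij] by blast
    with \<open>Max L - y \<notin> L\<close> show "y \<in> L"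
      by (auto split: if_splits)
  qed
  have "Max L \<in> L"
    using finite_L L_ne by (rule Max_in)
  then consider "x = 0" | "x = Max L" | "0 < x" "2 * x < Max L" | "0 < Max L - x" "2 * (Max L - x) < Max L"
    using assms by linarith
  then show ?thesis
  proof cases
    case 4
    then show ?thesis
      using pair[of "Max L - x"] assms(1) by auto
  qed (use pair zero_notin_L \<open>Max L \<in> L\<close> in auto)
qed

lemma unrefinable_half_missing_middle:
  assumes "Max L = 2 * c"
  shows "c \<notin> L"
proof
  assume "c \<in> L"
  moreover have "c \<noteq> Max L"
    using assms \<open>c \<in> L\<close> zero_notin_L by (cases c) auto
  ultimately show False
  proof (rule unrefinable_half_missing_part_cases)
    fix y
    assume "2 * y < Max L" "c = y"
    then show False
      using assms by linarith
  next
    fix y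
    assume "2 * y < Max L" "c = Max L - y"
    then show False
      using assms by linarith
  qed
qed

lemma sum_unrefinable_half_missing:
  "\<Sum>L = Max L + \<Sum>{1..(Max L - 1) div 2} + (\<Sum>x\<in>{1..(Max L - 1) div 2} - L. Max L - 2 * x)"
proof -
  define m where "m = Max L"
  define P where "P = (m - 1) div 2"
  have "m \<in> L"
    unfolding m_def using finite_L L_ne by (rule Max_in)
  have "\<Sum>L = m + \<Sum>(L - {m})"
    using sum.remove[OF finite_L \<open>m \<in> L\<close>, of id] by simp
  also have "\<Sum>(L - {m}) = (\<Sum>x\<in>{1..P}. if x \<in> L then x else m - x)"
    using sum.reindex_bij_betw[OF unrefinable_half_missing_bij, of id] unfolding m_def P_def by simp
  also have "\<dots> = (\<Sum>x\<in>{1..P}. x + (if x \<in> L then 0 else m - 2 * x))"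
    by (rule sum.cong) (auto simp: P_def)
  also have "\<dots> = \<Sum>{1..P} + (\<Sum>x\<in>{1..P} - L. m - 2 * x)"
    by (simp add: sum.distrib sum.If_cases Diff_eq)
  finally show ?thesis
    unfolding m_def P_def by simp
qed

end

lemma Max_unrefinable_half_missing_tri_le:
  assumes "2 \<le> n" "L \<in> unrefinable_set (tri n)" "card (missing_parts L) = Max L div 2"
  shows "Max L \<le> 2 * n - 4"
proof -
  have L: "finite L" "0 \<notin> L" "L \<noteq> {}" "\<not> refinable L" "\<Sum>L = tri n"
    using assms(2) unfolding unrefinable_set_def distinct_partition_def by auto
  define m where "m = Max L"
  define P where "P = (m - 1) div 2"
  define D where "D = (\<Sum>x\<in>{1..P} - L. m - 2 * x)"
  obtain q where q: "n = q + 2"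
    using assms(1) by (metis add.commute le_add_diff_inverse)
  have "\<Sum>L = m + \<Sum>{1..P} + D"
    using sum_unrefinable_half_missing[OF L(1-4) assms(3)] unfolding m_def P_def D_def .
  then have E: "n * (n + 1) = 2 * m + P * (P + 1) + 2 * D"
    using L(5) double_tri[of n] double_Sum_atLeast1_atMost[of P] by linarith
  have D_le: "m - 2 * x \<le> D" if "x \<in> {1..P} - L" for x
    unfolding D_def using that by (intro member_le_sum) auto
  consider "2 * n - 1 \<le> m" | "m = 2 * n - 2" | "m = 2 * n - 3" | "m \<le> 2 * n - 4"
    by linarith
  then show ?thesis
  proof cases
    case 1
    then have "(q + 1) * (q + 2) \<le> P * (P + 1)"
      unfolding P_def q by (intro mult_le_mono) auto
    then show ?thesis
      using E 1 unfolding q by (simp add: algebra_simps)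
  next
    case 2
    then have "P = q" "D = 1"
      using E unfolding P_def q by (simp_all add: algebra_simps)
    moreover have "even D"
      unfolding D_def using 2 unfolding q by (intro dvd_sum) (simp add: left_diff_distrib' [symmetric])
    ultimately show ?thesis
      by simp
  next
    case 3
    then have "P = q" "D = 2"
      using E unfolding P_def q by (simp_all add: algebra_simps)
    have "{1..P} - L \<subseteq> {q}"
    proof
      fix x
      assume x: "x \<in> {1..P} - L"
      then have "m - 2 * x = 2 * (q - x) + 1"
        using 3 \<open>P = q\<close> unfolding q by auto
      then show "x \<in> {q}"
        using D_le[OF x] \<open>D = 2\<close> x \<open>P = q\<close> by auto
    qed
    then have "D \<le> (\<Sum>x\<in>{q}. m - 2 * x)"
      unfolding D_def by (intro sum_mono2) auto
    then show ?thesis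
      using \<open>D = 2\<close> 3 unfolding q by simp
  qed (simp add: m_def)
qed

lemma Max_Ubar_tri:
  assumes "6 \<le> n" "L \<in> Ubar (tri n)"
  shows "Max L = 2 * n - 4"
  using assms Max_maximal_unrefinable_tri_ge[OF assms(1)] Max_unrefinable_half_missing_tri_le[of n L]
  unfolding Ubar_def maximal_unrefinable_def by fastforce

theorem lemma3p3:
  fixes k n :: nat and lam :: "nat set" and S :: "nat set" and Y :: "(nat \<times> nat) set" and z :: nat
  assumes "k \<ge> 4" and "n = 2 * k - 1" and "lam \<in> Ubar (tri n)"
  defines "S \<equiv> UNIV - lam"
  defines "Y \<equiv> KN S"
  defines "z \<equiv> card {s \<in> S. s < n - 2}"
  shows "(\<forall>i. i + 1 \<le> z \<longrightarrow> hook Y (i + 1) 1 = hook Y 1 (i + 1)) \<and>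
         (\<forall>i. z + 1 \<le> i \<and> i \<le> n - 2 \<longrightarrow> hook Y 1 (i + 1) = hook Y i 1)"
proof -
  have "7 \<le> n"
    using assms(1,2) by simp
  have lam: "finite lam" "0 \<notin> lam" "lam \<noteq> {}" "\<not> refinable lam"
    "card (missing_parts lam) = Max lam div 2"
    using assms(3) unfolding Ubar_def maximal_unrefinable_def unrefinable_set_def distinct_partition_def
    by auto
  have Max_lam: "Max lam = 2 * (n - 2)"
    using Max_Ubar_tri[OF _ assms(3)] \<open>7 \<le> n\<close> by simp
  have reflect: "x \<in> lam \<longleftrightarrow> 2 * (n - 2) - x \<notin> lam" if "x \<le> 2 * (n - 2)" "x \<noteq> n - 2" for x
    using unrefinable_half_missing_reflect[OF lam, of x] that unfolding Max_lam by simp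
  have middle: "n - 2 \<notin> lam"
    using unrefinable_half_missing_middle[OF lam Max_lam] .
  have "card lam = n - 2"
    using card_missing_parts[OF lam(1-3)] lam(5) unfolding Max_lam by simp
  then have "rank (- lam) (2 * (n - 2)) = n - 1"
    using rank_add_rank_Compl[of lam "2 * (n - 2)"] rank_Max[OF lam(1,3), unfolded Max_lam] \<open>7 \<le> n\<close>
    by linarith
  moreover have "S = - lam" "z = rank (- lam) (n - 2)"
    unfolding S_def z_def rank_def by auto
  ultimately show ?thesis
    using hook_KN_Compl_symmetric[OF lam(1,2) Max_lam middle reflect] unfolding Y_def
    by (auto simp: Suc_le_eq)
qed

end
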